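(* Let $\beta>0$ and let $p,d$ be nonnegative integers. Then $\Phi_\beta(p,d)=\Phi_\beta(p,0)^{d+1}$, and $\Phi_\beta(p,0)$ is the smallest positive root of the equation $$y^{p+1}-(\beta+1)y+\beta=0.$$ In particular, if $\beta\ge p$, then $\Phi_\beta(p,d)=1$ for all integers $d\ge 0$, i.e. $W_\beta$ crosses the line $y=px+d$ almost surely.
   Context: For $\beta>0$, the $\beta$-biased monotonic random walk $W_\beta$ is the random walk on $\mathbb{Z}^2$ starting at the origin $(0,0)$ which, independently at each step, moves from $(a,b)$ to $(a+1,b)$ with probability $1/(\beta+1)$ and to $(a,b+1)$ with probability $\beta/(\beta+1)$. For nonnegative integers $p,d$, $\Phi_\beta(p,d)$ denotes the probability that $W_\beta$ crosses the line $y=px+d$, i.e. the probability that $W_\beta$ visits at least one of the lattice points $(n,pn+d+1)$, $n\ge 0$. *)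

theory Defs
  imports "HOL-Probability.Probability"
begin

text \<open>The walk is driven by an i.i.d. stream of Boolean steps: True = step (a,b) -> (a,b+1)
  (probability beta/(beta+1)), False = step (a,b) -> (a+1,b) (probability 1/(beta+1)).\<close>

definition step_space :: "real \<Rightarrow> bool stream measure" where
  "step_space \<beta> = stream_space (measure_pmf (bernoulli_pmf (\<beta> / (\<beta> + 1))))"

definition walk_pos :: "bool stream \<Rightarrow> nat \<Rightarrow> nat \<times> nat" where
  "walk_pos \<omega> k = (length (filter Not (stake k \<omega>)), length (filter id (stake k \<omega>)))"

definition crosses :: "nat \<Rightarrow> nat \<Rightarrow> bool stream \<Rightarrow> bool" where
  "crosses p d \<omega> \<longleftrightarrow> (\<exists>k n. walk_pos \<omega> k = (n, p * n + d + 1))"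

definition Phi :: "real \<Rightarrow> nat \<Rightarrow> nat \<Rightarrow> real" where
  "Phi \<beta> p d = measure (step_space \<beta>) {\<omega> \<in> space (step_space \<beta>). crosses p d \<omega>}"

end

theory Submission
  imports Defs
begin

(*
  Write a = beta/(beta+1) for the probability of an up-step.  The walk visits (n, p n + d + 1)
  iff its height #up - p * #right equals d + 1.  The height moves by +1 with probability a and
  by -p with probability 1 - a, so it climbs one unit at a time: reaching level m + n means
  reaching m and then climbing n more.  Hence the probability F m of ever reaching level m is
  multiplicative, F m = F 1 ^ m, and first-step analysis F m = a F (m-1) + (1-a) F (m+p) shows
  that q = F 1 solves q = a + (1-a) q^(p+1), i.e. q^(p+1) - (beta+1) q + beta = 0.

  All of this is first proved for the finite-horizon probabilities reach_prob a p N m of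
  reaching level m within N steps, given by an explicit recursion: they increase with N, are
  sub- and super-multiplicative in the level, and are bounded by y^m for every positive root y.
  Continuity of measure along the increasing events "level m is reached within N steps" makes
  F the limit of reach_prob, and F inherits these properties; the bound by y^m gives minimality.
  An algebraic argument with the geometric sum shows that the root in (0,1] is 1 when beta >= p.
*)

lemma sets_step_space [measurable_cong]:
  "sets (step_space \<beta>) = sets (stream_space (count_space UNIV))"
  unfolding step_space_def by (rule sets_stream_space_cong) simp

lemma prob_space_step_space: "prob_space (step_space \<beta>)"
  unfolding step_space_def
  by (rule prob_space.prob_space_stream_space) (rule prob_space_measure_pmf)

text \<open>First-step decomposition: condition on the first step, which is up with probability
  \<open>\<beta>/(\<beta>+1)\<close>; the remaining steps are again distributed according to the step measure.\<close>

lemma measure_step_space_first_step: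
  fixes \<beta> :: real
  assumes "0 \<le> \<beta>" and [measurable]: "Measurable.pred (step_space \<beta>) P"
  defines "a \<equiv> \<beta> / (\<beta> + 1)"
  shows "measure (step_space \<beta>) {\<omega> \<in> space (step_space \<beta>). P \<omega>}
    = a * measure (step_space \<beta>) {\<omega> \<in> space (step_space \<beta>). P (True ## \<omega>)}
      + (1 - a) * measure (step_space \<beta>) {\<omega> \<in> space (step_space \<beta>). P (False ## \<omega>)}"
    (is "?lhs = a * ?up + (1 - a) * ?right")
proof -
  have a: "0 \<le> a" "a \<le> 1"
    using assms(1) unfolding a_def by auto
  have "{\<omega> \<in> space (step_space \<beta>). P \<omega>} \<in> sets (step_space \<beta>)"
    by measurable
  then have "ennreal ?lhs
      = (\<integral>\<^sup>+t. ennreal (measure (step_space \<beta>) {\<omega> \<in> space (step_space \<beta>). P (t ## \<omega>)})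
           \<partial>measure_pmf (bernoulli_pmf a))"
    unfolding step_space_def a_def
    by (rule prob_space.prob_stream_space[OF prob_space_measure_pmf])
  also have "\<dots> = ennreal ?up * a + ennreal ?right * (1 - a)"
    using a by (subst nn_integral_bernoulli_pmf) auto
  also have "\<dots> = ennreal (a * ?up) + ennreal ((1 - a) * ?right)"
    using a by (simp add: ennreal_mult' mult.commute)
  also have "\<dots> = ennreal (a * ?up + (1 - a) * ?right)"
    using a by (intro ennreal_plus[symmetric]) auto
  finally show ?thesis
    using a by (subst (asm) ennreal_inj) auto
qed


section \<open>The height process\<close>

definition height :: "nat \<Rightarrow> bool stream \<Rightarrow> nat \<Rightarrow> int" where
  "height p \<omega> j = int (length (filter id (stake j \<omega>))) - int p * int (length (filter Not (stake j \<omega>)))"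

lemma height_0 [simp]: "height p \<omega> 0 = 0"
  by (simp add: height_def)

lemma height_Suc: "height p \<omega> (Suc j) = (if shd \<omega> then 1 else - int p) + height p (stl \<omega>) j"
  by (simp add: height_def algebra_simps)

lemma crosses_iff_height: "crosses p d \<omega> \<longleftrightarrow> (\<exists>j. height p \<omega> j = int (d + 1))"
proof
  assume "crosses p d \<omega>"
  then obtain j n where "walk_pos \<omega> j = (n, p * n + d + 1)"
    unfolding crosses_def by blast
  then have "height p \<omega> j = int (d + 1)"
    unfolding walk_pos_def height_def by simp
  then show "\<exists>j. height p \<omega> j = int (d + 1)" ..
next
  assume "\<exists>j. height p \<omega> j = int (d + 1)"
  then obtain j where "height p \<omega> j = int (d + 1)" ..
  then have "int (length (filter id (stake j \<omega>))) = int (p * length (filter Not (stake j \<omega>)) + d + 1)"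
    unfolding height_def by simp
  then have "length (filter id (stake j \<omega>)) = p * length (filter Not (stake j \<omega>)) + d + 1"
    by linarith
  then show "crosses p d \<omega>"
    unfolding crosses_def walk_pos_def by auto
qed

text \<open>The recursive form is the first-step analysis; it also makes measurability immediate.\<close>

fun reaches :: "nat \<Rightarrow> nat \<Rightarrow> nat \<Rightarrow> bool stream \<Rightarrow> bool" where
  "reaches p 0 m \<omega> \<longleftrightarrow> m = 0"
| "reaches p (Suc N) m \<omega> \<longleftrightarrow> m = 0
     \<or> (shd \<omega> \<and> reaches p N (m - 1) (stl \<omega>)) \<or> (\<not> shd \<omega> \<and> reaches p N (m + p) (stl \<omega>))"

lemma reaches_measurable [measurable]: "Measurable.pred (step_space \<beta>) (reaches p N m)"
proof (induction N arbitrary: m)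
  case 0
  then show ?case by simp
next
  case (Suc N)
  note [measurable] = Suc
  show ?case by simp measurable
qed

lemma reaches_iff_height: "reaches p N m \<omega> \<longleftrightarrow> (\<exists>j\<le>N. height p \<omega> j = int m)"
proof (induction N arbitrary: m \<omega>)
  case 0
  then show ?case by auto
next
  case (Suc N)
  have "(\<exists>j\<le>Suc N. height p \<omega> j = int m) \<longleftrightarrow> m = 0 \<or> (\<exists>j\<le>N. height p \<omega> (Suc j) = int m)"
  proof
    assume "\<exists>j\<le>Suc N. height p \<omega> j = int m"
    then obtain j where "j \<le> Suc N" "height p \<omega> j = int m" by blast
    then show "m = 0 \<or> (\<exists>j\<le>N. height p \<omega> (Suc j) = int m)"
      by (cases j) auto
  next
    assume "m = 0 \<or> (\<exists>j\<le>N. height p \<omega> (Suc j) = int m)"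
    then show "\<exists>j\<le>Suc N. height p \<omega> j = int m"
      by (metis Suc_le_mono height_0 of_nat_0 zero_le)
  qed
  also have "\<dots> \<longleftrightarrow> reaches p (Suc N) m \<omega>"
    by (cases m) (auto simp: Suc height_Suc)
  finally show ?case by simp
qed

lemma reaches_mono: "reaches p N m \<omega> \<Longrightarrow> N \<le> N' \<Longrightarrow> reaches p N' m \<omega>"
  unfolding reaches_iff_height using order_trans by blast

lemma crosses_iff_reaches: "crosses p d \<omega> \<longleftrightarrow> (\<exists>N. reaches p N (d + 1) \<omega>)"
  unfolding crosses_iff_height reaches_iff_height by auto


section \<open>Finite-horizon reaching probabilities\<close>

fun reach_prob :: "real \<Rightarrow> nat \<Rightarrow> nat \<Rightarrow> nat \<Rightarrow> real" where
  "reach_prob a p 0 m = (if m = 0 then 1 else 0)"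
| "reach_prob a p (Suc N) m =
     (if m = 0 then 1 else a * reach_prob a p N (m - 1) + (1 - a) * reach_prob a p N (m + p))"

declare reach_prob.simps(2) [simp del]

lemma reach_prob_level_0 [simp]: "reach_prob a p N 0 = 1"
  by (cases N) (simp_all add: reach_prob.simps(2))

lemma reach_prob_Suc:
  "m \<noteq> 0 \<Longrightarrow> reach_prob a p (Suc N) m = a * reach_prob a p N (m - 1) + (1 - a) * reach_prob a p N (m + p)"
  by (simp add: reach_prob.simps(2))

lemma prob_reaches:
  assumes "0 \<le> \<beta>"
  shows "measure (step_space \<beta>) {\<omega> \<in> space (step_space \<beta>). reaches p N m \<omega>}
    = reach_prob (\<beta> / (\<beta> + 1)) p N m"
proof (induction N arbitrary: m)
  case 0
  interpret prob_space "step_space \<beta>" by (rule prob_space_step_space)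
  show ?case by (simp add: prob_space)
next
  case (Suc N)
  interpret prob_space "step_space \<beta>" by (rule prob_space_step_space)
  show ?case
  proof (cases "m = 0")
    case True
    then show ?thesis by (simp add: prob_space)
  next
    case False
    then show ?thesis
      by (subst measure_step_space_first_step[OF assms]) (simp_all add: Suc reach_prob_Suc)
  qed
qed

context
  fixes a :: real
  assumes a_nonneg: "0 \<le> a" and a_le_one: "a \<le> 1"
begin

lemma reach_prob_nonneg: "0 \<le> reach_prob a p N m"
  by (induction N arbitrary: m) (auto simp: reach_prob.simps(2) a_nonneg a_le_one)

lemma reach_prob_le_one: "reach_prob a p N m \<le> 1"
proof (induction N arbitrary: m)
  case (Suc N)
  have "a * reach_prob a p N (m - 1) + (1 - a) * reach_prob a p N (m + p) \<le> a * 1 + (1 - a) * 1"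
    using Suc a_nonneg a_le_one by (intro add_mono mult_left_mono) auto
  then show ?case by (cases "m = 0") (simp_all add: reach_prob_Suc)
qed simp

lemma reach_prob_Suc_mono: "reach_prob a p N m \<le> reach_prob a p (Suc N) m"
proof (induction N arbitrary: m)
  case 0
  then show ?case
    using a_nonneg a_le_one by (cases "m = 0") (auto simp: reach_prob_Suc)
next
  case (Suc N)
  show ?case
  proof (cases "m = 0")
    case False
    have "a * reach_prob a p N (m - 1) + (1 - a) * reach_prob a p N (m + p)
        \<le> a * reach_prob a p (Suc N) (m - 1) + (1 - a) * reach_prob a p (Suc N) (m + p)"
      using Suc a_nonneg a_le_one by (intro add_mono mult_left_mono) auto
    then show ?thesis using False by (simp add: reach_prob_Suc)
  qed simp
qed

lemma reach_prob_mono: "N \<le> N' \<Longrightarrow> reach_prob a p N m \<le> reach_prob a p N' m"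
  by (rule lift_Suc_mono_le[of "\<lambda>N. reach_prob a p N m"]) (auto intro: reach_prob_Suc_mono)

text \<open>To reach level \<open>m + n\<close> the process must first reach level \<open>m\<close> and then climb \<open>n\<close> more.\<close>

lemma reach_prob_submult: "reach_prob a p N (m + n) \<le> reach_prob a p N m * reach_prob a p N n"
proof (induction N arbitrary: m)
  case (Suc N)
  show ?case
  proof (cases "m = 0 \<or> n = 0")
    case False
    have "reach_prob a p (Suc N) (m + n)
        = a * reach_prob a p N ((m - 1) + n) + (1 - a) * reach_prob a p N ((m + p) + n)"
      using False by (simp add: algebra_simps reach_prob_Suc)
    also have "\<dots> \<le> a * (reach_prob a p N (m - 1) * reach_prob a p N n)
                  + (1 - a) * (reach_prob a p N (m + p) * reach_prob a p N n)"
      using Suc a_nonneg a_le_one by (intro add_mono mult_left_mono) auto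
    also have "\<dots> = reach_prob a p (Suc N) m * reach_prob a p N n"
      using False by (simp add: algebra_simps reach_prob_Suc)
    also have "\<dots> \<le> reach_prob a p (Suc N) m * reach_prob a p (Suc N) n"
      by (intro mult_left_mono reach_prob_Suc_mono reach_prob_nonneg)
    finally show ?thesis .
  qed auto
qed simp

text \<open>Conversely, reaching \<open>m\<close> within \<open>N\<close> steps and then climbing \<open>n\<close> more within \<open>M\<close> further
  steps reaches \<open>m + n\<close> within \<open>N + M\<close> steps.\<close>

lemma reach_prob_supermult:
  "reach_prob a p N m * reach_prob a p M n \<le> reach_prob a p (N + M) (m + n)"
proof (induction N arbitrary: m)
  case 0
  then show ?case by (simp add: reach_prob_nonneg)
next
  case (Suc N)
  show ?case
  proof (cases "m = 0")
    case True
    then show ?thesis using reach_prob_mono[of M "Suc N + M" p n] by simp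
  next
    case False
    have "reach_prob a p (Suc N) m * reach_prob a p M n
        = a * (reach_prob a p N (m - 1) * reach_prob a p M n)
          + (1 - a) * (reach_prob a p N (m + p) * reach_prob a p M n)"
      using False by (simp add: algebra_simps reach_prob_Suc)
    also have "\<dots> \<le> a * reach_prob a p (N + M) ((m - 1) + n) + (1 - a) * reach_prob a p (N + M) ((m + p) + n)"
      using Suc a_nonneg a_le_one by (intro add_mono mult_left_mono) auto
    also have "\<dots> = reach_prob a p (Suc N + M) (m + n)"
      using False by (simp add: algebra_simps reach_prob_Suc)
    finally show ?thesis .
  qed
qed

text \<open>Every positive fixed point \<open>y\<close> of \<open>y = a + (1 - a) y^(p+1)\<close> gives the supersolution
  \<open>m \<mapsto> y^m\<close> of the recursion, hence bounds all finite-horizon probabilities.\<close>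

lemma reach_prob_le_fixpoint_power:
  assumes "0 < y" and fixpoint: "a + (1 - a) * y ^ (p + 1) = y"
  shows "reach_prob a p N m \<le> y ^ m"
proof (induction N arbitrary: m)
  case 0
  then show ?case using assms by simp
next
  case (Suc N)
  show ?case
  proof (cases "m = 0")
    case False
    have "reach_prob a p (Suc N) m = a * reach_prob a p N (m - 1) + (1 - a) * reach_prob a p N (m + p)"
      using False by (simp add: reach_prob_Suc)
    also have "\<dots> \<le> a * y ^ (m - 1) + (1 - a) * y ^ (m + p)"
      using Suc a_nonneg a_le_one by (intro add_mono mult_left_mono) auto
    also have "\<dots> = y ^ (m - 1) * (a + (1 - a) * y ^ (p + 1))"
      using False by (cases m) (auto simp: algebra_simps power_add)
    also have "\<dots> = y ^ m"
      using False fixpoint by (cases m) auto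
    finally show ?thesis .
  qed simp
qed

end


section \<open>Probabilities of ever reaching a level\<close>

definition level_prob :: "real \<Rightarrow> nat \<Rightarrow> nat \<Rightarrow> real" where
  "level_prob \<beta> p m = measure (step_space \<beta>) {\<omega> \<in> space (step_space \<beta>). \<exists>N. reaches p N m \<omega>}"

lemma Phi_eq_level_prob: "Phi \<beta> p d = level_prob \<beta> p (d + 1)"
  unfolding Phi_def level_prob_def by (simp add: crosses_iff_reaches)

context
  fixes \<beta> :: real and p :: nat
  assumes \<beta>_nonneg: "0 \<le> \<beta>"
begin

lemma up_prob: "0 \<le> \<beta> / (\<beta> + 1)" "\<beta> / (\<beta> + 1) \<le> 1"
  using \<beta>_nonneg by auto

text \<open>Continuity of measure along the increasing events \<open>reaches p N m\<close>.\<close>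

lemma reach_prob_tendsto: "(\<lambda>N. reach_prob (\<beta> / (\<beta> + 1)) p N m) \<longlonglongrightarrow> level_prob \<beta> p m"
proof -
  interpret prob_space "step_space \<beta>" by (rule prob_space_step_space)
  let ?A = "\<lambda>N. {\<omega> \<in> space (step_space \<beta>). reaches p N m \<omega>}"
  have "(\<lambda>N. measure (step_space \<beta>) (?A N)) \<longlonglongrightarrow> measure (step_space \<beta>) (\<Union>N. ?A N)"
    by (rule finite_Lim_measure_incseq) (auto simp: incseq_def intro: reaches_mono)
  moreover have "(\<Union>N. ?A N) = {\<omega> \<in> space (step_space \<beta>). \<exists>N. reaches p N m \<omega>}"
    by auto
  ultimately show ?thesis
    using prob_reaches[OF \<beta>_nonneg] by (simp add: level_prob_def)
qed

lemma reach_prob_le_level_prob: "reach_prob (\<beta> / (\<beta> + 1)) p N m \<le> level_prob \<beta> p m"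
  by (rule incseq_le[OF _ reach_prob_tendsto]) (auto simp: incseq_def intro: reach_prob_mono up_prob)

lemma level_prob_le_one: "level_prob \<beta> p m \<le> 1"
  by (rule LIMSEQ_le_const2[OF reach_prob_tendsto]) (auto intro: reach_prob_le_one up_prob)

lemma level_prob_0: "level_prob \<beta> p 0 = 1"
  using reach_prob_tendsto[of 0] by (simp add: LIMSEQ_const_iff)

lemma level_prob_rec:
  assumes "m \<noteq> 0"
  shows "level_prob \<beta> p m
    = \<beta> / (\<beta> + 1) * level_prob \<beta> p (m - 1) + (1 - \<beta> / (\<beta> + 1)) * level_prob \<beta> p (m + p)"
proof (rule LIMSEQ_unique)
  show "(\<lambda>N. reach_prob (\<beta> / (\<beta> + 1)) p (Suc N) m) \<longlonglongrightarrow> level_prob \<beta> p m"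
    using reach_prob_tendsto by (rule LIMSEQ_Suc)
  show "(\<lambda>N. reach_prob (\<beta> / (\<beta> + 1)) p (Suc N) m)
      \<longlonglongrightarrow> \<beta> / (\<beta> + 1) * level_prob \<beta> p (m - 1) + (1 - \<beta> / (\<beta> + 1)) * level_prob \<beta> p (m + p)"
    unfolding reach_prob_Suc[OF assms] by (intro tendsto_intros reach_prob_tendsto)
qed

lemma level_prob_mult: "level_prob \<beta> p (m + n) = level_prob \<beta> p m * level_prob \<beta> p n"
proof (rule antisym)
  have prod: "(\<lambda>N. reach_prob (\<beta> / (\<beta> + 1)) p N m * reach_prob (\<beta> / (\<beta> + 1)) p N n)
      \<longlonglongrightarrow> level_prob \<beta> p m * level_prob \<beta> p n"
    by (intro tendsto_mult reach_prob_tendsto)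
  show "level_prob \<beta> p (m + n) \<le> level_prob \<beta> p m * level_prob \<beta> p n"
    by (rule LIMSEQ_le[OF reach_prob_tendsto prod]) (auto intro: reach_prob_submult up_prob)
  show "level_prob \<beta> p m * level_prob \<beta> p n \<le> level_prob \<beta> p (m + n)"
    by (rule LIMSEQ_le_const2[OF prod])
      (auto intro: order_trans[OF reach_prob_supermult reach_prob_le_level_prob] up_prob)
qed

lemma level_prob_power: "level_prob \<beta> p m = level_prob \<beta> p 1 ^ m"
proof (induction m)
  case (Suc m)
  then show ?case
    using level_prob_mult[of 1 m] by simp
qed (simp add: level_prob_0)

lemma level_prob_fixpoint:
  "\<beta> / (\<beta> + 1) + (1 - \<beta> / (\<beta> + 1)) * level_prob \<beta> p 1 ^ (p + 1) = level_prob \<beta> p 1"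
proof -
  have "level_prob \<beta> p 1
      = \<beta> / (\<beta> + 1) * level_prob \<beta> p 0 + (1 - \<beta> / (\<beta> + 1)) * level_prob \<beta> p (p + 1)"
    using level_prob_rec[of 1] by simp
  then show ?thesis
    by (simp only: level_prob_0 level_prob_power[of "p + 1"] mult_1_right)
qed

lemma level_prob_le_fixpoint:
  assumes "0 < y" "\<beta> / (\<beta> + 1) + (1 - \<beta> / (\<beta> + 1)) * y ^ (p + 1) = y"
  shows "level_prob \<beta> p 1 \<le> y"
  by (rule LIMSEQ_le_const2[OF reach_prob_tendsto])
    (use reach_prob_le_fixpoint_power[OF up_prob assms, of _ 1] in simp)

lemma level_prob_pos:
  assumes "0 < \<beta>"
  shows "0 < level_prob \<beta> p 1"
proof -
  have "reach_prob (\<beta> / (\<beta> + 1)) p 1 1 = \<beta> / (\<beta> + 1)"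
    by (simp add: reach_prob_Suc)
  moreover have "0 < \<beta> / (\<beta> + 1)"
    using assms by simp
  ultimately show ?thesis
    using reach_prob_le_level_prob[of 1 1] by linarith
qed

end


section \<open>The characteristic equation\<close>

lemma fixpoint_iff_root:
  fixes \<beta> y :: real
  assumes "0 \<le> \<beta>"
  shows "\<beta> / (\<beta> + 1) + (1 - \<beta> / (\<beta> + 1)) * y ^ (p + 1) = y \<longleftrightarrow> y ^ (p + 1) - (\<beta> + 1) * y + \<beta> = 0"
proof -
  have "1 - \<beta> / (\<beta> + 1) = 1 / (\<beta> + 1)"
    using assms by (simp add: field_simps)
  then have "\<beta> / (\<beta> + 1) + (1 - \<beta> / (\<beta> + 1)) * y ^ (p + 1) = (\<beta> + y ^ (p + 1)) / (\<beta> + 1)"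
    by (simp add: add_divide_distrib)
  then show ?thesis
    using assms by (simp add: divide_eq_eq algebra_simps)
qed

text \<open>For \<open>\<beta> \<ge> p\<close> the only root in \<open>(0,1]\<close> is \<open>1\<close>: for \<open>0 < q < 1\<close> the equation says
  \<open>1 + q + \<dots> + q^p = \<beta> + 1\<close>, but the left side is at most \<open>1 + p q < 1 + \<beta>\<close>.\<close>

lemma root_in_unit_interval_eq_one:
  fixes \<beta> q :: real
  assumes "0 < \<beta>" "real p \<le> \<beta>" "0 < q" "q \<le> 1"
    and root: "q ^ (p + 1) - (\<beta> + 1) * q + \<beta> = 0"
  shows "q = 1"
proof (rule ccontr)
  assume "q \<noteq> 1"
  with \<open>q \<le> 1\<close> have "q < 1" by simp
  have "(\<Sum>i<Suc p. q ^ i) = 1 + (\<Sum>i<p. q ^ Suc i)"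
    by (subst sum.lessThan_Suc_shift) simp
  also have "\<dots> \<le> 1 + (\<Sum>i<p. q)"
    using \<open>0 < q\<close> \<open>q < 1\<close> by (intro add_left_mono sum_mono) (simp add: mult_left_le power_le_one)
  also have "\<dots> = 1 + real p * q"
    by simp
  also have "\<dots> \<le> 1 + \<beta> * q"
    using \<open>0 < q\<close> \<open>real p \<le> \<beta>\<close> by (simp add: mult_right_mono)
  also have "\<dots> < \<beta> + 1"
    using \<open>0 < \<beta>\<close> \<open>q < 1\<close> by simp
  finally have geometric_sum_lt: "(\<Sum>i<Suc p. q ^ i) < \<beta> + 1" .
  have "(1 - q) * (\<Sum>i<Suc p. q ^ i) = 1 - q ^ Suc p"
    by (rule one_diff_power_eq[symmetric])
  also have "\<dots> = (1 - q) * (\<beta> + 1)"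
    using root by (simp add: algebra_simps)
  finally have "(\<Sum>i<Suc p. q ^ i) = \<beta> + 1"
    using \<open>q < 1\<close> by simp
  with geometric_sum_lt show False
    by simp
qed


theorem theorem1:
  fixes \<beta> :: real and p d :: nat
  assumes "\<beta> > 0"
  shows "Phi \<beta> p d = Phi \<beta> p 0 ^ (d + 1)
    \<and> (Phi \<beta> p 0 > 0
       \<and> Phi \<beta> p 0 ^ (p + 1) - (\<beta> + 1) * Phi \<beta> p 0 + \<beta> = 0
       \<and> (\<forall>y::real. y > 0 \<longrightarrow> y ^ (p + 1) - (\<beta> + 1) * y + \<beta> = 0 \<longrightarrow> Phi \<beta> p 0 \<le> y))
    \<and> (\<beta> \<ge> real p \<longrightarrow> (\<forall>d'::nat. Phi \<beta> p d' = 1))"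
proof -
  have \<beta>: "0 \<le> \<beta>" using assms by simp
  define q where "q = level_prob \<beta> p 1"
  have Phi_power: "Phi \<beta> p d' = q ^ (d' + 1)" for d'
    unfolding q_def Phi_eq_level_prob using level_prob_power[OF \<beta>] .
  have q_pos: "0 < q" and q_le_one: "q \<le> 1"
    unfolding q_def using level_prob_pos[OF \<beta> assms] level_prob_le_one[OF \<beta>] .
  have q_root: "q ^ (p + 1) - (\<beta> + 1) * q + \<beta> = 0"
    unfolding q_def using level_prob_fixpoint[OF \<beta>] fixpoint_iff_root[OF \<beta>] by blast
  have q_least: "q \<le> y" if "0 < y" "y ^ (p + 1) - (\<beta> + 1) * y + \<beta> = 0" for y
    unfolding q_def using level_prob_le_fixpoint[OF \<beta> that(1)] fixpoint_iff_root[OF \<beta>] that(2) by blast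
  have q_one: "q = 1" if "real p \<le> \<beta>"
    using root_in_unit_interval_eq_one[OF assms that q_pos q_le_one q_root] .
  show ?thesis
    unfolding Phi_power using q_pos q_root q_least q_one by simp
qed

end
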